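(* Consider a binary treatment variable $X\in\{0,1\}$, a binary "intention to treat" variable $X^*\in\{0,1\}$, and a discrete response variable $Y$, under an observational regime and, for $x\in\{0,1\}$, an interventional regime "$X\leftarrow x$". Write $\Pr(\cdot)$ for observational probabilities and $\Pr(\cdot\mid X\leftarrow x)$ for probabilities under intervention $X\leftarrow x$. Assume: (i) in the observational regime $X=X^*$; (ii) $\Pr(X^*=x^*\mid X\leftarrow x)=\Pr(X^*=x^* )$ for all $x,x^*\in\{0,1\}$, where $\Pr(X^*=x^* )=\Pr(X=x^* )$; (iii) $\Pr(Y=y\mid X^*=x,X=x)=\Pr(Y=y\mid X^*=x,X\leftarrow x)$ for all $x\in\{0,1\}$ and all $y$. Suppose the observational joint distribution of $(X,Y)$ is known with $0<\Pr(X=1)<1$, and the distribution of $Y$ under each intervention $X\leftarrow x$ ($x=0,1$) is known. Then, for each $x\in\{0,1\}$, the joint distribution of $(X^*,Y)$ under the intervention $X\leftarrow x$ is identified, i.e. uniquely determined by these known quantities.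
   Context: $X^*$ ("intention to treat") denotes the treatment a patient or their doctor would choose if unconstrained; it is a pre-treatment covariate. In the interventional regime $X\leftarrow x$, treatment $x$ is imposed externally without regard to $X^*$. "Identified" means uniquely determined by the observational joint distribution of $(X,Y)$ together with the interventional distributions of $Y$. *)

theory Defs
  imports "HOL-Probability.Probability"
begin

text \<open>A causal model for (X*, X, Y): the observational regime is a joint pmf P on
  triples (X*, X, Y); for each x, the interventional regime X <- x is a joint pmf Q x on
  pairs (X*, Y). Treatment and intention to treat are binary (bool), Y is discrete
  (any type, pmfs have countable support).\<close>

definition model_assumptions ::
  "(bool \<times> bool \<times> 'y) pmf \<Rightarrow> (bool \<Rightarrow> (bool \<times> 'y) pmf) \<Rightarrow> bool" where
  "model_assumptions P Q \<longleftrightarrow>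
     \<comment> \<open>(i) observationally X = X*\<close>
     (\<forall>(s, x, y) \<in> set_pmf P. s = x) \<and>
     \<comment> \<open>(ii) Pr(X* = s | X <- x) = Pr(X* = s)\<close>
     (\<forall>x s. measure_pmf.prob (Q x) {(s', y'). s' = s} =
            measure_pmf.prob P {(s', x', y'). s' = s}) \<and>
     \<comment> \<open>(iii) Pr(Y = y | X* = x, X = x) = Pr(Y = y | X* = x, X <- x)\<close>
     (\<forall>x y. measure_pmf.prob P {(s', x', y'). s' = x \<and> x' = x \<and> y' = y}
              / measure_pmf.prob P {(s', x', y'). s' = x \<and> x' = x}
           = measure_pmf.prob (Q x) {(s', y'). s' = x \<and> y' = y}
              / measure_pmf.prob (Q x) {(s', y'). s' = x})"

definition obs_XY :: "(bool \<times> bool \<times> 'y) pmf \<Rightarrow> (bool \<times> 'y) pmf" where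
  "obs_XY P = map_pmf (\<lambda>(s, x, y). (x, y)) P"

definition int_Y :: "(bool \<Rightarrow> (bool \<times> 'y) pmf) \<Rightarrow> bool \<Rightarrow> 'y pmf" where
  "int_Y Q x = map_pmf snd (Q x)"

end

theory Submission
  imports Defs
begin

text \<open>Since X = X* observationally, P is the image of the observational law of (X, Y)
  under (x, y) \<mapsto> (x, x, y). By (ii) and (i), Pr(X* = x | X <- x) = Pr(X = x) > 0, so (iii)
  identifies the diagonal slice: Pr(X* = x, Y = y | X <- x) = Pr(X = x, Y = y). The other
  slice Pr(X* = \<not> x, Y = y | X <- x) is then the known interventional Pr(Y = y | X <- x)
  minus the diagonal one.\<close>

lemma measure_pmf_fst_eq_Not:
  fixes p :: "(bool \<times> 'a) pmf"
  shows "measure_pmf.prob p {(x, y). x = (\<not> b)} = 1 - measure_pmf.prob p {(x, y). x = b}"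
proof -
  have "{(x, y). x = (\<not> b)} = space (measure_pmf p) - {(x, y::'a). x = b}" by auto
  then show ?thesis using measure_pmf.prob_compl[of "{(x, y). x = b}" p] by simp
qed

lemma pmf_map_snd_bool:
  fixes p :: "(bool \<times> 'y) pmf"
  shows "pmf (map_pmf snd p) y = pmf p (s, y) + pmf p (\<not> s, y)"
proof -
  have "snd -` {y} = {(s, y), (\<not> s, y)}" by auto
  then show ?thesis
    by (simp add: pmf_map measure_pmf.finite_measure_eq_sum_singleton measure_pmf_single)
qed

lemma pmf_eq_by_slice_and_snd_marginal:
  fixes p q :: "(bool \<times> 'y) pmf"
  assumes slice: "\<And>y. pmf p (s, y) = pmf q (s, y)"
    and marginal: "map_pmf snd p = map_pmf snd q"
  shows "p = q"
proof (rule pmf_eqI)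
  fix z :: "bool \<times> 'y"
  obtain t y where z: "z = (t, y)" by (cases z)
  have "pmf p (\<not> s, y) = pmf q (\<not> s, y)"
    using pmf_map_snd_bool[of p y s] pmf_map_snd_bool[of q y s] slice[of y] marginal by simp
  then show "pmf p z = pmf q z"
    using slice[of y] z by (cases "t = s") (auto simp: eq_commute[of t])
qed

lemma pmf_eq_map_diag_obs_XY:
  fixes P :: "(bool \<times> bool \<times> 'y) pmf"
  assumes "\<forall>(s, x, y) \<in> set_pmf P. s = x"
  shows "P = map_pmf (\<lambda>(x, y). (x, x, y)) (obs_XY P)"
proof -
  have "map_pmf (\<lambda>(x, y). (x, x, y)) (obs_XY P) = map_pmf (\<lambda>(s, x, y). (x, x, y)) P"
    by (simp add: obs_XY_def map_pmf_comp split_def)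
  also have "\<dots> = map_pmf id P"
    by (rule map_pmf_cong) (use assms in auto)
  finally show ?thesis by simp
qed

lemma pmf_diagonal_eq_obs_XY:
  fixes P :: "(bool \<times> bool \<times> 'y) pmf" and Q :: "bool \<Rightarrow> (bool \<times> 'y) pmf"
  assumes model: "model_assumptions P Q"
    and pos: "0 < measure_pmf.prob (obs_XY P) {(x', y). x' = x}"
  shows "pmf (Q x) (x, y) = pmf (obs_XY P) (x, y)"
proof -
  let ?O = "obs_XY P" and ?diag = "\<lambda>(x, y). (x, x, y)"
  let ?a = "measure_pmf.prob ?O {(x', y). x' = x}"
  have P_eq: "P = map_pmf ?diag ?O"
    using model unfolding model_assumptions_def by (intro pmf_eq_map_diag_obs_XY) auto
  have "measure_pmf.prob (Q x) {(s', y'). s' = x} = measure_pmf.prob P {(s', x', y'). s' = x}"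
    using model unfolding model_assumptions_def by blast
  also have "\<dots> = ?a"
    by (subst P_eq) (simp add: vimage_def split_def)
  finally have Q_marginal: "measure_pmf.prob (Q x) {(s', y'). s' = x} = ?a" .
  have "?diag -` {(s', x', y'). s' = x \<and> x' = x \<and> y' = y} = {(x, y)}" by auto
  then have P_joint: "measure_pmf.prob P {(s', x', y'). s' = x \<and> x' = x \<and> y' = y} = pmf ?O (x, y)"
    by (subst P_eq) (simp add: pmf_map measure_pmf_single)
  have P_marginal: "measure_pmf.prob P {(s', x', y'). s' = x \<and> x' = x} = ?a"
    by (subst P_eq) (simp add: vimage_def split_def)
  have "{(s', y'). s' = x \<and> y' = y} = {(x, y)}" by auto
  then have Q_joint: "measure_pmf.prob (Q x) {(s', y'). s' = x \<and> y' = y} = pmf (Q x) (x, y)"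
    by (simp add: measure_pmf_single)
  have "pmf ?O (x, y) / ?a = pmf (Q x) (x, y) / ?a"
    using model P_joint P_marginal Q_joint Q_marginal unfolding model_assumptions_def by metis
  then show ?thesis using pos by simp
qed

theorem corollary1:
  fixes P1 P2 :: "(bool \<times> bool \<times> 'y) pmf"
    and Q1 Q2 :: "bool \<Rightarrow> (bool \<times> 'y) pmf"
  assumes "model_assumptions P1 Q1"
    and "model_assumptions P2 Q2"
    and "obs_XY P1 = obs_XY P2"
    and "0 < measure_pmf.prob (obs_XY P1) {(x, y). x = True}"
    and "measure_pmf.prob (obs_XY P1) {(x, y). x = True} < 1"
    and "\<And>x. int_Y Q1 x = int_Y Q2 x"
  shows "\<forall>x. Q1 x = Q2 x"
proof
  fix x
  have pos: "0 < measure_pmf.prob (obs_XY P1) {(x', y). x' = x}"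
    using assms(4,5) measure_pmf_fst_eq_Not[of "obs_XY P1" True] by (cases x) auto
  have "pmf (Q1 x) (x, y) = pmf (Q2 x) (x, y)" for y
    using pmf_diagonal_eq_obs_XY[OF assms(1) pos] pmf_diagonal_eq_obs_XY[OF assms(2)]
      pos assms(3) by metis
  then show "Q1 x = Q2 x"
    using assms(6)[of x] unfolding int_Y_def by (rule pmf_eq_by_slice_and_snd_marginal)
qed

end
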